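(* The following algorithm is a linearizable, sequentially-exact, wait-free and fence-free implementation of RangeMaxRegister. It uses only atomic Read/Write objects and has constant step complexity in all its operations. The shared object is an atomic Read/Write register $R$ initialized to $1$. Each process has a persistent local variable $r$ initialized to $1$. ${\sf RMaxWrite}(x)$: $r\leftarrow\max\{r,R.{\sf Read}()\}$; if $x>r$ then $\{r\leftarrow x,\ R.{\sf Write}(x)\}$; return true. ${\sf RMaxRead}()$: $r\leftarrow\max\{r,R.{\sf Read}()\}$; return $r$.
   Context: Model: $n\ge2$ asynchronous, crash-prone processes $p_0,\dots,p_{n-1}$ communicate through atomic base objects. Each atomic base-object operation is one step. The notation $\{I_1,I_2\}$ means the two instructions may be executed in either order. RangeMaxRegister (sequential specification). States are $n$-vectors $(r_0,\dots,r_{n-1})$ of natural numbers, with initial state $(1,\dots,1)$. Invocations by $p_i$ carry subscript $i$. - ${\sf RMaxWrite}_i(x)$ sets $r_i\leftarrow x$ if $x>r_i$ (otherwise leaves the state unchanged) and returns true. - ${\sf RMaxRead}_i()$ may return any $x\in\{r_i,r_i+1,\dots,\max(r_0,\dots,r_{n-1})\}$, and sets $r_i\leftarrow x$. MaxRegister (sequential specification, initial value $1$). MaxWrite$(v)$ writes $v$ only if $v$ exceeds the largest value written so far. MaxRead returns the largest value written so far. Properties: - Linearizable: every finite execution admits a total order of its completed (and possibly some pending) operations that is a sequential execution of the specification, respects real-time order, and agrees on inputs and outputs. - Sequentially-exact: every sequential execution of the algorithm (one in which no two operations overlap) is a sequential execution of MaxRegister, with RMaxRead and RMaxWrite read as MaxRead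 and MaxWrite. - Wait-free: every operation of a process that keeps taking steps completes in finitely many of its own steps. - Fence-free: the algorithm requires no ordering among its steps beyond data dependence. - Step complexity: the maximum number of steps needed to complete an operation. *)

theory Defs
  imports Main
begin

datatype rop = RMaxWrite nat | RMaxRead
datatype resp = RTrue | RVal nat

text \<open>Actions of an execution: invocation of an operation by process i,
  one atomic base-object step of process i (a Read or a Write of R),
  and the (local) return of a response by process i.\<close>
datatype act = Invoke nat rop | Step nat | Return nat resp

fun act_proc :: "act \<Rightarrow> nat" where
  "act_proc (Invoke i _) = i" | "act_proc (Step i) = i" | "act_proc (Return i _) = i"

fun is_inv :: "act \<Rightarrow> bool" where
  "is_inv (Invoke _ _) = True" | "is_inv _ = False"

fun inv_op :: "act \<Rightarrow> rop" where
  "inv_op (Invoke _ ov) = ov" | "inv_op _ = undefined"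

fun is_ret_of :: "nat \<Rightarrow> act \<Rightarrow> bool" where
  "is_ret_of i (Return j _) = (i = j)" | "is_ret_of i _ = False"

fun ret_resp :: "act \<Rightarrow> resp" where
  "ret_resp (Return _ v) = v" | "ret_resp _ = undefined"

text \<open>WRd x: next step is R.Read() inside RMaxWrite(x).
  WWrA x: r <- x already done, next step is R.Write(x).
  WWrB x: next step is R.Write(x), after which r <- x is done
  (the two orders of the block {r <- x, R.Write(x)}).
  RRd: next step is R.Read() inside RMaxRead().
  Done v: operation finished locally, about to return v.\<close>
datatype pcs = Idle | WRd nat | WWrA nat | WWrB nat | RRd | Done resp

record config =
  shR :: nat
  lr  :: "nat \<Rightarrow> nat"
  pc  :: "nat \<Rightarrow> pcs"

definition init :: config where
  "init = \<lparr>shR = 1, lr = (\<lambda>_. 1), pc = (\<lambda>_. Idle)\<rparr>"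

fun start :: "rop \<Rightarrow> pcs" where
  "start (RMaxWrite x) = WRd x" | "start RMaxRead = RRd"

inductive trans :: "nat \<Rightarrow> config \<Rightarrow> act \<Rightarrow> config \<Rightarrow> bool" for n where
  invoke: "\<lbrakk>i < n; pc c i = Idle\<rbrakk> \<Longrightarrow>
     trans n c (Invoke i ov) (c\<lparr>pc := (pc c)(i := start ov)\<rparr>)"
| w_read_gt_A: "\<lbrakk>i < n; pc c i = WRd x; x > max (lr c i) (shR c)\<rbrakk> \<Longrightarrow>
     trans n c (Step i) (c\<lparr>lr := (lr c)(i := x), pc := (pc c)(i := WWrA x)\<rparr>)"
| w_read_gt_B: "\<lbrakk>i < n; pc c i = WRd x; x > max (lr c i) (shR c)\<rbrakk> \<Longrightarrow>
     trans n c (Step i) (c\<lparr>lr := (lr c)(i := max (lr c i) (shR c)), pc := (pc c)(i := WWrB x)\<rparr>)"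
| w_read_le: "\<lbrakk>i < n; pc c i = WRd x; \<not> x > max (lr c i) (shR c)\<rbrakk> \<Longrightarrow>
     trans n c (Step i) (c\<lparr>lr := (lr c)(i := max (lr c i) (shR c)), pc := (pc c)(i := Done RTrue)\<rparr>)"
| w_write_A: "\<lbrakk>i < n; pc c i = WWrA x\<rbrakk> \<Longrightarrow>
     trans n c (Step i) (c\<lparr>shR := x, pc := (pc c)(i := Done RTrue)\<rparr>)"
| w_write_B: "\<lbrakk>i < n; pc c i = WWrB x\<rbrakk> \<Longrightarrow>
     trans n c (Step i) (c\<lparr>shR := x, lr := (lr c)(i := x), pc := (pc c)(i := Done RTrue)\<rparr>)"
| r_read: "\<lbrakk>i < n; pc c i = RRd\<rbrakk> \<Longrightarrow>
     trans n c (Step i) (c\<lparr>lr := (lr c)(i := max (lr c i) (shR c)),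
                           pc := (pc c)(i := Done (RVal (max (lr c i) (shR c))))\<rparr>)"
| ret: "\<lbrakk>i < n; pc c i = Done v\<rbrakk> \<Longrightarrow>
     trans n c (Return i v) (c\<lparr>pc := (pc c)(i := Idle)\<rparr>)"

inductive reach :: "nat \<Rightarrow> config \<Rightarrow> act list \<Rightarrow> bool" for n where
  reach_init: "reach n init []"
| reach_step: "\<lbrakk>reach n c tr; trans n c a c'\<rbrakk> \<Longrightarrow> reach n c' (tr @ [a])"

definition inf_exec :: "nat \<Rightarrow> (nat \<Rightarrow> config) \<Rightarrow> (nat \<Rightarrow> act) \<Rightarrow> bool" where
  "inf_exec n f g \<longleftrightarrow> f 0 = init \<and> (\<forall>k. trans n (f k) (g k) (f (Suc k)))"

definition ret_idx :: "act list \<Rightarrow> nat \<Rightarrow> nat option" where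
  "ret_idx tr k =
     (case filter (\<lambda>m. is_ret_of (act_proc (tr ! k)) (tr ! m)) [Suc k..<length tr] of
        [] \<Rightarrow> None | m # _ \<Rightarrow> Some m)"

fun rmr_legal :: "nat \<Rightarrow> (nat \<Rightarrow> nat) \<Rightarrow> (nat \<times> rop \<times> resp) list \<Rightarrow> bool" where
  "rmr_legal n s [] = True"
| "rmr_legal n s ((i, RMaxWrite x, v) # h) =
     (v = RTrue \<and> rmr_legal n (if x > s i then s(i := x) else s) h)"
| "rmr_legal n s ((i, RMaxRead, RVal y) # h) =
     (s i \<le> y \<and> y \<le> Max {s j |j. j < n} \<and> rmr_legal n (s(i := y)) h)"
| "rmr_legal n s ((i, RMaxRead, RTrue) # h) = False"

text \<open>MaxRegister (RMaxWrite read as MaxWrite, RMaxRead as MaxRead); m = largest value written so far.\<close>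
fun mr_legal :: "nat \<Rightarrow> (rop \<times> resp) list \<Rightarrow> bool" where
  "mr_legal m [] = True"
| "mr_legal m ((RMaxWrite x, RTrue) # h) = mr_legal (max m x) h"
| "mr_legal m ((RMaxRead, RVal y) # h) = (y = m \<and> mr_legal m h)"
| "mr_legal m ((RMaxWrite x, RVal y) # h) = False"
| "mr_legal m ((RMaxRead, RTrue) # h) = False"

text \<open>A history (trace) is linearizable w.r.t. RangeMaxRegister: there is a list L of
  distinct invocation positions with responses, containing every completed operation
  (with its actual response) and possibly some pending ones, respecting real-time
  order, which is a legal sequential RangeMaxRegister history.\<close>
definition linearizable :: "nat \<Rightarrow> act list \<Rightarrow> bool" where
  "linearizable n tr \<longleftrightarrow> (\<exists>L :: (nat \<times> resp) list.
     distinct (map fst L) \<and>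
     (\<forall>(k, v) \<in> set L. k < length tr \<and> is_inv (tr ! k) \<and>
         (\<forall>m. ret_idx tr k = Some m \<longrightarrow> v = ret_resp (tr ! m))) \<and>
     (\<forall>k m. k < length tr \<and> is_inv (tr ! k) \<and> ret_idx tr k = Some m \<longrightarrow> k \<in> fst ` set L) \<and>
     (\<forall>a b m. a < length L \<and> b < length L \<and> ret_idx tr (fst (L ! a)) = Some m \<and>
         m < fst (L ! b) \<longrightarrow> a < b) \<and>
     rmr_legal n (\<lambda>_. 1) (map (\<lambda>(k, v). (act_proc (tr ! k), inv_op (tr ! k), v)) L))"

definition alg_linearizable :: "nat \<Rightarrow> bool" where
  "alg_linearizable n \<longleftrightarrow> (\<forall>c tr. reach n c tr \<longrightarrow> linearizable n tr)"

definition sequential :: "act list \<Rightarrow> bool" where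
  "sequential tr \<longleftrightarrow> (\<forall>k1 k2. k1 < k2 \<and> k2 < length tr \<and> is_inv (tr ! k1) \<and> is_inv (tr ! k2) \<longrightarrow>
      (\<exists>m. ret_idx tr k1 = Some m \<and> m < k2))"

definition seq_hist :: "act list \<Rightarrow> (rop \<times> resp) list" where
  "seq_hist tr = [(inv_op (tr ! k), ret_resp (tr ! the (ret_idx tr k))).
                    k \<leftarrow> [0..<length tr], is_inv (tr ! k) \<and> ret_idx tr k \<noteq> None]"

definition sequentially_exact :: "nat \<Rightarrow> bool" where
  "sequentially_exact n \<longleftrightarrow> (\<forall>c tr. reach n c tr \<and> sequential tr \<longrightarrow> mr_legal 1 (seq_hist tr))"

definition wait_free :: "nat \<Rightarrow> bool" where
  "wait_free n \<longleftrightarrow> (\<forall>f g k i ov. inf_exec n f g \<and> g k = Invoke i ov \<and>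
      (\<forall>m. \<exists>m' > m. act_proc (g m') = i) \<longrightarrow> (\<exists>m > k. is_ret_of i (g m)))"

definition step_complexity_le :: "nat \<Rightarrow> nat \<Rightarrow> bool" where
  "step_complexity_le n C \<longleftrightarrow> (\<forall>c tr k i ov j. reach n c tr \<and> k < length tr \<and>
      tr ! k = Invoke i ov \<and> j \<le> length tr \<and>
      (\<forall>m. k < m \<and> m < j \<longrightarrow> \<not> is_ret_of i (tr ! m)) \<longrightarrow>
      card {m. k < m \<and> m < j \<and> tr ! m = Step i} \<le> C)"

end

theory Submission
  imports Defs
begin

text \<open>
  Each operation is linearized at the step after which it only has to return: an
  RMaxWrite(x) that writes R at its write of R, every other operation at its read of R.
  Let s be the RangeMaxRegister state reached by the linearized operations. Then s_i never
  exceeds the local r of p_i, while R and every local r, except an r already set to x whose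
  R.Write(x) is still due, are bounded by some s_j. Hence a read returns a value between s_i
  and max s, as the specification demands.

  In a sequential execution R holds the maximum M written by the completed operations (or
  max M x once the running RMaxWrite(x) has written), and every r is at most R apart from
  the value just adopted by a writer; so reads return exactly M.

  An operation takes at most two steps, one read and at most one write of R, which bounds
  the step complexity and gives wait-freedom.
\<close>

section \<open>Traces and pending invocations\<close>

lemma ret_idx_SomeD:
  assumes "ret_idx tr k = Some m"
  shows "k < m \<and> m < length tr \<and> is_ret_of (act_proc (tr ! k)) (tr ! m)"
proof -
  obtain ms where "filter (\<lambda>m. is_ret_of (act_proc (tr ! k)) (tr ! m)) [Suc k..<length tr] = m # ms"
    using assms unfolding ret_idx_def by (auto split: list.splits)
  then have "m \<in> set (filter (\<lambda>m. is_ret_of (act_proc (tr ! k)) (tr ! m)) [Suc k..<length tr])"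
    by simp
  then show ?thesis by auto
qed

lemma ret_idx_snoc_length: "ret_idx (tr @ [a]) (length tr) = None"
  unfolding ret_idx_def by simp

lemma ret_idx_snoc:
  assumes "k < length tr"
  shows "ret_idx (tr @ [a]) k = (case ret_idx tr k of
      Some m \<Rightarrow> Some m
    | None \<Rightarrow> if is_ret_of (act_proc (tr ! k)) a then Some (length tr) else None)"
proof -
  have "filter (\<lambda>m. is_ret_of (act_proc ((tr @ [a]) ! k)) ((tr @ [a]) ! m)) [Suc k..<length tr]
      = filter (\<lambda>m. is_ret_of (act_proc (tr ! k)) (tr ! m)) [Suc k..<length tr]"
    using assms by (intro filter_cong) (auto simp: nth_append)
  moreover have "[Suc k..<length (tr @ [a])] = [Suc k..<length tr] @ [length tr]"
    using assms by simp
  ultimately show ?thesis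
    using assms unfolding ret_idx_def by (auto simp: nth_append split: list.splits)
qed

lemma ret_idx_snoc_non_return:
  "k < length tr \<Longrightarrow> \<not> is_ret_of (act_proc (tr ! k)) a \<Longrightarrow> ret_idx (tr @ [a]) k = ret_idx tr k"
  by (simp add: ret_idx_snoc split: option.split)

lemma ret_idx_snoc_Return:
  "k < length tr \<Longrightarrow> ret_idx (tr @ [Return i v]) k =
     (case ret_idx tr k of Some m \<Rightarrow> Some m
      | None \<Rightarrow> if act_proc (tr ! k) = i then Some (length tr) else None)"
  by (cases "tr ! k") (auto simp: ret_idx_snoc)

lemma ret_idx_snoc_non_return_eq_Some:
  assumes "\<And>j. \<not> is_ret_of j a"
  shows "ret_idx (tr @ [a]) k = Some m \<longleftrightarrow> k < length tr \<and> ret_idx tr k = Some m"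
proof (cases "k < length tr")
  case True
  then show ?thesis using assms by (simp add: ret_idx_snoc_non_return)
next
  case False
  then show ?thesis by (simp add: ret_idx_def)
qed

lemma ret_idx_snoc_Return_eq_Some:
  "ret_idx (tr @ [Return i v]) k = Some m \<longleftrightarrow> k < length tr \<and>
     (ret_idx tr k = Some m \<or> ret_idx tr k = None \<and> act_proc (tr ! k) = i \<and> m = length tr)"
proof (cases "k < length tr")
  case True
  then show ?thesis by (auto simp: ret_idx_snoc_Return split: option.split)
next
  case False
  then show ?thesis by (simp add: ret_idx_def)
qed

definition pending :: "act list \<Rightarrow> nat \<Rightarrow> bool" where
  "pending tr k \<longleftrightarrow> k < length tr \<and> is_inv (tr ! k) \<and> ret_idx tr k = None"

lemma pending_snoc:
  "pending (tr @ [a]) k \<longleftrightarrow>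
     (k = length tr \<and> is_inv a) \<or> (pending tr k \<and> \<not> is_ret_of (act_proc (tr ! k)) a)"
  unfolding pending_def
  by (cases "k < length tr")
     (auto simp: ret_idx_snoc ret_idx_snoc_length nth_append split: option.splits)

lemma pending_snoc_Step: "pending (tr @ [Step i]) k \<longleftrightarrow> pending tr k"
  by (simp add: pending_snoc)

lemma pending_snoc_Invoke: "pending (tr @ [Invoke i ov]) k \<longleftrightarrow> k = length tr \<or> pending tr k"
  by (auto simp: pending_snoc)

lemma pending_snoc_Return:
  "pending (tr @ [Return i v]) k \<longleftrightarrow> pending tr k \<and> act_proc (tr ! k) \<noteq> i"
  by (auto simp: pending_snoc)

lemma nth_snoc_pending: "pending tr k \<Longrightarrow> (tr @ [a]) ! k = tr ! k"
  by (simp add: pending_def nth_append)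

inductive_cases trans_InvokeE: "trans n c (Invoke i ov) c'"
inductive_cases trans_StepE: "trans n c (Step i) c'"
inductive_cases trans_ReturnE: "trans n c (Return i v) c'"

lemma trans_Step_pc: "trans n c (Step i) c' \<Longrightarrow> pc c' = (pc c)(i := pc c' i)"
  by (erule trans_StepE) auto

lemma trans_Step_enabled: "trans n c (Step i) c' \<Longrightarrow> pc c i \<noteq> Idle \<and> (\<forall>v. pc c i \<noteq> Done v)"
  by (erule trans_StepE) auto

fun executes :: "rop \<Rightarrow> pcs \<Rightarrow> bool" where
  "executes (RMaxWrite x) p \<longleftrightarrow> p = WRd x \<or> p = WWrA x \<or> p = WWrB x \<or> p = Done RTrue"
| "executes RMaxRead p \<longleftrightarrow> p = RRd \<or> (\<exists>y. p = Done (RVal y))"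

lemma executes_iff:
  "executes ov (WRd x) \<longleftrightarrow> ov = RMaxWrite x" "executes ov (WWrA x) \<longleftrightarrow> ov = RMaxWrite x"
  "executes ov (WWrB x) \<longleftrightarrow> ov = RMaxWrite x" "executes ov RRd \<longleftrightarrow> ov = RMaxRead"
  by (cases ov; auto)+

lemma executes_start: "executes ov (start ov)"
  by (cases ov) auto

lemma executes_not_Idle: "executes ov p \<Longrightarrow> p \<noteq> Idle"
  by (cases ov) auto

lemma trans_Step_executes: "trans n c (Step i) c' \<Longrightarrow> executes ov (pc c i) \<Longrightarrow> executes ov (pc c' i)"
  by (erule trans_StepE) (auto elim: executes.elims)

definition pending_consistent :: "config \<Rightarrow> act list \<Rightarrow> bool" where
  "pending_consistent c tr \<longleftrightarrow>
     (\<forall>k. pending tr k \<longrightarrow> executes (inv_op (tr ! k)) (pc c (act_proc (tr ! k)))) \<and>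
     (\<forall>i. pc c i \<noteq> Idle \<longrightarrow> (\<exists>k. pending tr k \<and> act_proc (tr ! k) = i)) \<and>
     (\<forall>k k'. pending tr k \<and> pending tr k' \<and> act_proc (tr ! k) = act_proc (tr ! k') \<longrightarrow> k = k')"

lemma pending_consistent_active:
  assumes "pending_consistent c tr" "pc c i \<noteq> Idle"
  obtains k where "pending tr k" "act_proc (tr ! k) = i" "executes (inv_op (tr ! k)) (pc c i)"
    "\<And>k'. pending tr k' \<Longrightarrow> act_proc (tr ! k') = i \<Longrightarrow> k' = k"
  using assms unfolding pending_consistent_def by metis

lemma pending_consistent_not_Idle:
  "pending_consistent c tr \<Longrightarrow> pending tr k \<Longrightarrow> pc c (act_proc (tr ! k)) \<noteq> Idle"
  unfolding pending_consistent_def by (metis executes_not_Idle)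

lemma pending_consistent_Invoke:
  assumes cons: "pending_consistent c tr" and tr: "trans n c (Invoke i ov) c'"
  shows "pending_consistent c' (tr @ [Invoke i ov])"
proof -
  have idle: "pc c i = Idle" and pc': "pc c' = (pc c)(i := start ov)"
    using tr by (auto elim: trans_InvokeE)
  have other: "pending tr k \<Longrightarrow> act_proc (tr ! k) \<noteq> i" for k
    using cons idle pending_consistent_not_Idle by metis
  show ?thesis
    unfolding pending_consistent_def pending_snoc_Invoke
  proof (intro conjI allI impI)
    fix k assume "k = length tr \<or> pending tr k"
    then show "executes (inv_op ((tr @ [Invoke i ov]) ! k))
        (pc c' (act_proc ((tr @ [Invoke i ov]) ! k)))"
      using cons other executes_start
      by (auto simp: pc' nth_snoc_pending pending_consistent_def)
  next
    fix j assume "pc c' j \<noteq> Idle"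
    then show "\<exists>k. (k = length tr \<or> pending tr k) \<and> act_proc ((tr @ [Invoke i ov]) ! k) = j"
    proof (cases "j = i")
      case False
      then obtain k where "pending tr k" "act_proc (tr ! k) = j"
        using cons \<open>pc c' j \<noteq> Idle\<close> by (auto simp: pc' pending_consistent_def)
      then show ?thesis by (auto simp: nth_snoc_pending)
    qed (auto intro: exI[of _ "length tr"])
  next
    fix k k' assume "(k = length tr \<or> pending tr k) \<and> (k' = length tr \<or> pending tr k') \<and>
      act_proc ((tr @ [Invoke i ov]) ! k) = act_proc ((tr @ [Invoke i ov]) ! k')"
    then show "k = k'"
      using cons other by (fastforce simp: nth_snoc_pending pending_consistent_def)
  qed
qed

lemma pending_consistent_Step:
  assumes cons: "pending_consistent c tr" and tr: "trans n c (Step i) c'"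
  shows "pending_consistent c' (tr @ [Step i])"
proof -
  have pc': "pc c' = (pc c)(i := pc c' i)" by (rule trans_Step_pc[OF tr])
  obtain k where k: "pending tr k" "act_proc (tr ! k) = i" "executes (inv_op (tr ! k)) (pc c i)"
    using pending_consistent_active[OF cons] trans_Step_enabled[OF tr] by metis
  have "executes (inv_op (tr ! k)) (pc c' i)" by (rule trans_Step_executes[OF tr k(3)])
  then have "pc c' i \<noteq> Idle" by (rule executes_not_Idle)
  then have active: "pc c' j \<noteq> Idle \<Longrightarrow> pc c j \<noteq> Idle" for j
    using pc' trans_Step_enabled[OF tr] by (metis fun_upd_other)
  show ?thesis
    using cons trans_Step_executes[OF tr] active unfolding pending_consistent_def pending_snoc_Step
    by (subst pc') (auto simp: nth_snoc_pending cong: conj_cong)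
qed

lemma pending_consistent_Return:
  assumes cons: "pending_consistent c tr" and tr: "trans n c (Return i v) c'"
  shows "pending_consistent c' (tr @ [Return i v])"
proof -
  have pc': "pc c' = (pc c)(i := Idle)"
    using tr by (auto elim: trans_ReturnE)
  show ?thesis
    using cons unfolding pending_consistent_def pending_snoc_Return pc'
    by (auto simp: nth_snoc_pending cong: conj_cong)
qed

lemma reach_pending_consistent: "reach n c tr \<Longrightarrow> pending_consistent c tr"
proof (induction rule: reach.induct)
  case reach_init
  show ?case by (simp add: pending_consistent_def init_def pending_def)
next
  case (reach_step c tr a c')
  then show ?case
    by (cases a)
       (auto intro: pending_consistent_Invoke pending_consistent_Step pending_consistent_Return)
qed

section \<open>Linearizability\<close>

definition lin_hist :: "act list \<Rightarrow> (nat \<times> resp) list \<Rightarrow> (nat \<times> rop \<times> resp) list" where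
  "lin_hist tr L = map (\<lambda>(k, v). (act_proc (tr ! k), inv_op (tr ! k), v)) L"

definition is_linearization :: "act list \<Rightarrow> (nat \<times> resp) list \<Rightarrow> bool" where
  "is_linearization tr L \<longleftrightarrow> distinct (map fst L) \<and>
     (\<forall>(k, v) \<in> set L. k < length tr \<and> is_inv (tr ! k) \<and>
         (\<forall>m. ret_idx tr k = Some m \<longrightarrow> v = ret_resp (tr ! m))) \<and>
     (\<forall>k m. k < length tr \<and> is_inv (tr ! k) \<and> ret_idx tr k = Some m \<longrightarrow> k \<in> fst ` set L) \<and>
     (\<forall>a b m. a < length L \<and> b < length L \<and> ret_idx tr (fst (L ! a)) = Some m \<and>
         m < fst (L ! b) \<longrightarrow> a < b)"

lemma linearizable_iff:
  "linearizable n tr \<longleftrightarrow> (\<exists>L. is_linearization tr L \<and> rmr_legal n (\<lambda>_. 1) (lin_hist tr L))"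
  unfolding linearizable_def is_linearization_def lin_hist_def by blast

lemma is_linearizationI:
  assumes "distinct (map fst L)"
    and "\<And>k v. (k, v) \<in> set L \<Longrightarrow> k < length tr \<and> is_inv (tr ! k)"
    and "\<And>k v m. (k, v) \<in> set L \<Longrightarrow> ret_idx tr k = Some m \<Longrightarrow> v = ret_resp (tr ! m)"
    and "\<And>k m. k < length tr \<Longrightarrow> is_inv (tr ! k) \<Longrightarrow> ret_idx tr k = Some m \<Longrightarrow> k \<in> fst ` set L"
    and "\<And>a b m. a < length L \<Longrightarrow> b < length L \<Longrightarrow> ret_idx tr (fst (L ! a)) = Some m \<Longrightarrow>
      m < fst (L ! b) \<Longrightarrow> a < b"
  shows "is_linearization tr L"
  using assms unfolding is_linearization_def by blast

lemma
  assumes "is_linearization tr L"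
  shows is_linearization_distinct: "distinct (map fst L)"
    and is_linearization_entry: "(k, v) \<in> set L \<Longrightarrow> k < length tr \<and> is_inv (tr ! k)"
    and is_linearization_response:
      "(k, v) \<in> set L \<Longrightarrow> ret_idx tr k = Some m \<Longrightarrow> v = ret_resp (tr ! m)"
    and is_linearization_complete:
      "k < length tr \<Longrightarrow> is_inv (tr ! k) \<Longrightarrow> ret_idx tr k = Some m \<Longrightarrow> k \<in> fst ` set L"
    and is_linearization_real_time:
      "a < length L \<Longrightarrow> b < length L \<Longrightarrow> ret_idx tr (fst (L ! a)) = Some m \<Longrightarrow>
       m < fst (L ! b) \<Longrightarrow> a < b"
  using assms unfolding is_linearization_def by (blast dest: bspec)+

lemma is_linearization_index: "is_linearization tr L \<Longrightarrow> e \<in> set L \<Longrightarrow> fst e < length tr"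
  using is_linearization_entry[of tr L "fst e" "snd e"] by simp

lemma lin_hist_snoc: "is_linearization tr L \<Longrightarrow> lin_hist (tr @ [a]) L = lin_hist tr L"
  unfolding lin_hist_def
  by (rule map_cong) (auto simp: nth_append split: prod.split dest!: is_linearization_index)

lemma lin_hist_append:
  "lin_hist tr (L @ [(k, v)]) = lin_hist tr L @ [(act_proc (tr ! k), inv_op (tr ! k), v)]"
  by (simp add: lin_hist_def)

lemma is_linearization_snoc_non_return:
  assumes lin: "is_linearization tr L" and a: "\<And>j. \<not> is_ret_of j a"
  shows "is_linearization (tr @ [a]) L"
proof (rule is_linearizationI)
  note ri = ret_idx_snoc_non_return_eq_Some[OF a]
  have nth: "k < length tr \<Longrightarrow> (tr @ [a]) ! k = tr ! k" for k
    by (simp add: nth_append)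
  show "distinct (map fst L)"
    using lin by (rule is_linearization_distinct)
  show "k < length (tr @ [a]) \<and> is_inv ((tr @ [a]) ! k)" if "(k, v) \<in> set L" for k v
    using is_linearization_entry[OF lin that] by (simp add: nth)
  show "v = ret_resp ((tr @ [a]) ! m)" if "(k, v) \<in> set L" "ret_idx (tr @ [a]) k = Some m" for k v m
    using that is_linearization_response[OF lin] ret_idx_SomeD[of tr k m] by (simp add: ri nth)
  show "k \<in> fst ` set L" if "k < length (tr @ [a])" "is_inv ((tr @ [a]) ! k)"
    "ret_idx (tr @ [a]) k = Some m" for k m
    using that is_linearization_complete[OF lin] by (simp add: ri nth)
  show "i < j" if "i < length L" "j < length L" "ret_idx (tr @ [a]) (fst (L ! i)) = Some m"
    "m < fst (L ! j)" for i j m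
    using that is_linearization_real_time[OF lin] by (simp add: ri)
qed

lemma is_linearization_append_pending:
  assumes lin: "is_linearization tr L" and k0: "pending tr k0" "k0 \<notin> fst ` set L"
  shows "is_linearization tr (L @ [(k0, v)])"
proof (rule is_linearizationI)
  show "distinct (map fst (L @ [(k0, v)]))"
    using is_linearization_distinct[OF lin] k0(2) by simp
  show "k < length tr \<and> is_inv (tr ! k)" if "(k, w) \<in> set (L @ [(k0, v)])" for k w
    using that is_linearization_entry[OF lin] k0(1) by (auto simp: pending_def)
  show "w = ret_resp (tr ! m)" if "(k, w) \<in> set (L @ [(k0, v)])" "ret_idx tr k = Some m" for k w m
    using that is_linearization_response[OF lin] k0(1) by (auto simp: pending_def)
  show "k \<in> fst ` set (L @ [(k0, v)])" if "k < length tr" "is_inv (tr ! k)" "ret_idx tr k = Some m"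
    for k m
    using that is_linearization_complete[OF lin] by auto
  show "i < j" if "i < length (L @ [(k0, v)])" "j < length (L @ [(k0, v)])"
    "ret_idx tr (fst ((L @ [(k0, v)]) ! i)) = Some m" "m < fst ((L @ [(k0, v)]) ! j)" for i j m
  proof -
    have "i < length L"
      using that(1,3) k0(1) by (auto simp: nth_append pending_def less_Suc_eq)
    then show ?thesis
      using that is_linearization_real_time[OF lin] by (auto simp: nth_append less_Suc_eq)
  qed
qed

lemma is_linearization_snoc_Return:
  assumes lin: "is_linearization tr L"
    and returned: "\<And>k. pending tr k \<Longrightarrow> act_proc (tr ! k) = i \<Longrightarrow> (k, v) \<in> set L"
  shows "is_linearization (tr @ [Return i v]) L"
proof (rule is_linearizationI)
  let ?tr = "tr @ [Return i v]"
  have nth: "k < length tr \<Longrightarrow> ?tr ! k = tr ! k" for k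
    by (simp add: nth_append)
  note ri = ret_idx_snoc_Return_eq_Some
  show "distinct (map fst L)"
    using lin by (rule is_linearization_distinct)
  show "k < length ?tr \<and> is_inv (?tr ! k)" if "(k, w) \<in> set L" for k w
    using is_linearization_entry[OF lin that] by (simp add: nth)
  show "w = ret_resp (?tr ! m)" if kw: "(k, w) \<in> set L" and m: "ret_idx ?tr k = Some m" for k w m
  proof (cases "ret_idx tr k")
    case None
    with m have "act_proc (tr ! k) = i" "m = length tr" "k < length tr"
      by (auto simp: ri)
    moreover have "(k, v) \<in> set L"
      using returned is_linearization_entry[OF lin kw] None \<open>act_proc (tr ! k) = i\<close>
      by (simp add: pending_def)
    ultimately show ?thesis
      using eq_key_imp_eq_value[OF is_linearization_distinct[OF lin] kw] by simp
  next
    case (Some m')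
    with m have "m = m'" "m' < length tr"
      by (auto simp: ri dest: ret_idx_SomeD)
    then show ?thesis
      using is_linearization_response[OF lin kw Some] by (simp add: nth)
  qed
  show "k \<in> fst ` set L" if "k < length ?tr" "is_inv (?tr ! k)" "ret_idx ?tr k = Some m" for k m
  proof -
    have k: "k < length tr" "is_inv (tr ! k)"
      using that by (auto simp: ri nth)
    show ?thesis
    proof (cases "ret_idx tr k")
      case None
      then have "(k, v) \<in> set L"
        using that k returned by (auto simp: ri pending_def)
      then show ?thesis by force
    qed (use k is_linearization_complete[OF lin] in blast)
  qed
  show "a < b" if "a < length L" "b < length L" "ret_idx ?tr (fst (L ! a)) = Some m"
    "m < fst (L ! b)" for a b m
  proof -
    have "fst (L ! b) < length tr"
      using is_linearization_index[OF lin] that(2) by simp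
    then have "ret_idx tr (fst (L ! a)) = Some m"
      using that(3,4) by (auto simp: ri)
    then show ?thesis
      using that is_linearization_real_time[OF lin] by blast
  qed
qed

fun rmr_state :: "(nat \<Rightarrow> nat) \<Rightarrow> (nat \<times> rop \<times> resp) list \<Rightarrow> nat \<Rightarrow> nat" where
  "rmr_state s [] = s"
| "rmr_state s ((i, RMaxWrite x, v) # h) = rmr_state (if x > s i then s(i := x) else s) h"
| "rmr_state s ((i, RMaxRead, RVal y) # h) = rmr_state (s(i := y)) h"
| "rmr_state s ((i, RMaxRead, RTrue) # h) = rmr_state s h"

lemma rmr_legal_append:
  "rmr_legal n s (h @ h') \<longleftrightarrow> rmr_legal n s h \<and> rmr_legal n (rmr_state s h) h'"
  by (induction s h rule: rmr_state.induct) (simp_all add: fun_upd_def)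

lemma rmr_state_append: "rmr_state s (h @ h') = rmr_state (rmr_state s h) h'"
  by (induction s h rule: rmr_state.induct) (simp_all add: fun_upd_def)

lemma rmr_state_RMaxWrite: "rmr_state s [(i, RMaxWrite x, v)] = s(i := max (s i) x)"
  by (auto simp: fun_eq_iff max_def)

definition dominated :: "nat \<Rightarrow> (nat \<Rightarrow> nat) \<Rightarrow> nat \<Rightarrow> bool" where
  "dominated n s v \<longleftrightarrow> (\<exists>j<n. v \<le> s j)"

lemma dominated_self: "i < n \<Longrightarrow> dominated n s (s i)"
  unfolding dominated_def by blast

lemma dominated_max: "dominated n s u \<Longrightarrow> dominated n s v \<Longrightarrow> dominated n s (max u v)"
  by (cases "u \<le> v") (simp_all add: max_def)

lemma dominated_update: "dominated n s v \<Longrightarrow> s i \<le> y \<Longrightarrow> dominated n (s(i := y)) v"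
  unfolding dominated_def by (metis fun_upd_apply le_trans)

lemma dominated_le_Max: "dominated n s v \<Longrightarrow> v \<le> Max {s j |j. j < n}"
proof -
  assume "dominated n s v"
  then obtain j where "j < n" "v \<le> s j" unfolding dominated_def by blast
  moreover have "finite {s j |j. j < n}" by simp
  moreover have "s j \<in> {s j |j. j < n}" using \<open>j < n\<close> by blast
  ultimately show ?thesis using Max_ge le_trans by blast
qed

definition abs_rel :: "nat \<Rightarrow> config \<Rightarrow> (nat \<Rightarrow> nat) \<Rightarrow> bool" where
  "abs_rel n c s \<longleftrightarrow>
     (\<forall>i. s i \<le> lr c i) \<and> dominated n s (shR c) \<and>
     (\<forall>i. (\<forall>x. pc c i \<noteq> WWrA x) \<longrightarrow> dominated n s (lr c i)) \<and>
     (\<forall>i x. pc c i = WWrA x \<longrightarrow> lr c i = x) \<and>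
     (\<forall>i x. pc c i = WWrB x \<longrightarrow> lr c i < x)"

lemma abs_rel_init: "0 < n \<Longrightarrow> abs_rel n init (\<lambda>_. 1)"
  by (auto simp: abs_rel_def init_def dominated_def)

lemma abs_rel_internal:
  assumes tr: "trans n c a c'" and internal: "\<And>i v. a = Step i \<Longrightarrow> pc c' i \<noteq> Done v"
    and abs: "abs_rel n c s"
  shows "abs_rel n c' s"
  using tr
proof cases
  case (invoke i ov)
  then show ?thesis using abs by (cases ov) (auto simp: abs_rel_def)
next
  case (w_read_gt_A i x)
  have "s i \<le> lr c i" using abs by (simp add: abs_rel_def)
  with w_read_gt_A have "s i \<le> x" by simp
  with w_read_gt_A abs show ?thesis by (auto simp: abs_rel_def)
next
  case (w_read_gt_B i x)
  have "s i \<le> lr c i" using abs by (simp add: abs_rel_def)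
  then have "s i \<le> max (lr c i) (shR c)" by simp
  with w_read_gt_B abs show ?thesis by (auto simp: abs_rel_def intro: dominated_max)
next
  case (ret i v)
  then show ?thesis using abs by (auto simp: abs_rel_def)
qed (use internal in auto)

lemma abs_rel_Done:
  assumes abs: "abs_rel n c s" and y: "s i \<le> y" "y \<le> lr c' i"
    and dom: "dominated n (s(i := y)) (lr c' i)" "dominated n (s(i := y)) (shR c')"
    and pc': "pc c' = (pc c)(i := Done v)" and lr': "\<And>j. j \<noteq> i \<Longrightarrow> lr c' j = lr c j"
  shows "abs_rel n c' (s(i := y))"
  unfolding abs_rel_def
proof (intro conjI allI impI)
  fix j
  show "(s(i := y)) j \<le> lr c' j"
    using abs y lr' unfolding abs_rel_def by (cases "j = i") auto
  show "dominated n (s(i := y)) (lr c' j)" if "\<forall>x. pc c' j \<noteq> WWrA x"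
    using abs y dom lr' pc' that dominated_update unfolding abs_rel_def by (cases "j = i") auto
  show "lr c' j = x" if "pc c' j = WWrA x" for x
    using abs lr' pc' that unfolding abs_rel_def by (cases "j = i") auto
  show "lr c' j < x" if "pc c' j = WWrB x" for x
    using abs lr' pc' that unfolding abs_rel_def by (cases "j = i") auto
qed (rule dom(2))

lemma abs_rel_linearize:
  assumes tr: "trans n c (Step i) c'" and i: "pc c' i = Done v" and ov: "executes ov (pc c i)"
    and abs: "abs_rel n c s"
  shows "rmr_legal n s [(i, ov, v)] \<and> abs_rel n c' (rmr_state s [(i, ov, v)])"
proof -
  have si: "s i \<le> lr c i" and R: "dominated n s (shR c)"
    and lr: "\<And>j. (\<And>x. pc c j \<noteq> WWrA x) \<Longrightarrow> dominated n s (lr c j)"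
    using abs unfolding abs_rel_def by blast+
  from tr show ?thesis
  proof cases
    case (w_read_le x)
    let ?y = "max (lr c i) (shR c)"
    have "dominated n s ?y" using lr R w_read_le by (simp add: dominated_max)
    moreover have "max (s i) x \<le> ?y" using si w_read_le(4) by (auto simp: max_def)
    ultimately have "abs_rel n c' (s(i := max (s i) x))"
      using R w_read_le by (intro abs_rel_Done[OF abs]) (auto intro: dominated_update)
    moreover have "ov = RMaxWrite x" "v = RTrue" using w_read_le ov i by (auto simp: executes_iff)
    ultimately show ?thesis by (simp add: rmr_state_RMaxWrite del: rmr_state.simps)
  next
    case (w_write_A x)
    have "lr c i = x" using abs w_write_A by (simp add: abs_rel_def)
    then have "abs_rel n c' (s(i := x))"
      using si w_write_A dominated_self[of i n "s(i := x)"] by (intro abs_rel_Done[OF abs]) auto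
    moreover have "ov = RMaxWrite x" "v = RTrue" using w_write_A ov i by (auto simp: executes_iff)
    ultimately show ?thesis
      using si \<open>lr c i = x\<close> by (simp add: rmr_state_RMaxWrite max_absorb2 del: rmr_state.simps)
  next
    case (w_write_B x)
    have "lr c i < x" using abs w_write_B by (simp add: abs_rel_def)
    then have "abs_rel n c' (s(i := x))"
      using si w_write_B dominated_self[of i n "s(i := x)"] by (intro abs_rel_Done[OF abs]) auto
    moreover have "ov = RMaxWrite x" "v = RTrue" using w_write_B ov i by (auto simp: executes_iff)
    ultimately show ?thesis
      using si \<open>lr c i < x\<close> by (simp add: rmr_state_RMaxWrite max_absorb2 del: rmr_state.simps)
  next
    case r_read
    let ?y = "max (lr c i) (shR c)"
    have "dominated n s ?y" using lr R r_read by (simp add: dominated_max)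
    moreover have "s i \<le> ?y" using si by simp
    ultimately have "abs_rel n c' (s(i := ?y))"
      using R r_read dominated_self[of i n "s(i := ?y)"]
      by (intro abs_rel_Done[OF abs]) (auto intro: dominated_update)
    moreover have "ov = RMaxRead" "v = RVal ?y" using r_read ov i by (auto simp: executes_iff)
    ultimately show ?thesis
      using \<open>s i \<le> ?y\<close> dominated_le_Max[OF \<open>dominated n s ?y\<close>] by simp
  qed (use i in auto)
qed

definition lin_coupled :: "config \<Rightarrow> act list \<Rightarrow> (nat \<times> resp) list \<Rightarrow> bool" where
  "lin_coupled c tr L \<longleftrightarrow>
     (\<forall>k v. pending tr k \<longrightarrow> ((k, v) \<in> set L \<longleftrightarrow> pc c (act_proc (tr ! k)) = Done v))"

definition lin_inv :: "nat \<Rightarrow> config \<Rightarrow> act list \<Rightarrow> (nat \<times> resp) list \<Rightarrow> bool" where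
  "lin_inv n c tr L \<longleftrightarrow> is_linearization tr L \<and> lin_coupled c tr L \<and>
     rmr_legal n (\<lambda>_. 1) (lin_hist tr L) \<and> abs_rel n c (rmr_state (\<lambda>_. 1) (lin_hist tr L))"

lemma lin_inv_Invoke:
  assumes inv: "lin_inv n c tr L" and cons: "pending_consistent c tr"
    and tr: "trans n c (Invoke i ov) c'"
  shows "lin_inv n c' (tr @ [Invoke i ov]) L"
proof -
  have lin: "is_linearization tr L" and coupled: "lin_coupled c tr L"
    using inv by (simp_all add: lin_inv_def)
  have idle: "pc c i = Idle" and pc': "pc c' = (pc c)(i := start ov)"
    using tr by (auto elim: trans_InvokeE)
  have "pending tr k \<Longrightarrow> act_proc (tr ! k) \<noteq> i" for k
    using cons idle pending_consistent_not_Idle by metis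
  moreover have "(length tr, v) \<notin> set L" for v
    using is_linearization_entry[OF lin] by blast
  moreover have "start ov \<noteq> Done v" for v
    by (cases ov) auto
  ultimately have "lin_coupled c' (tr @ [Invoke i ov]) L"
    using coupled unfolding lin_coupled_def pending_snoc_Invoke
    by (auto simp: pc' nth_snoc_pending)
  moreover have "abs_rel n c' (rmr_state (\<lambda>_. 1) (lin_hist tr L))"
    using inv tr by (auto simp: lin_inv_def intro: abs_rel_internal)
  ultimately show ?thesis
    using inv is_linearization_snoc_non_return[OF lin]
    by (simp add: lin_inv_def lin_hist_snoc[OF lin])
qed

lemma lin_inv_Step_internal:
  assumes inv: "lin_inv n c tr L" and tr: "trans n c (Step i) c'"
    and internal: "\<And>v. pc c' i \<noteq> Done v"
  shows "lin_inv n c' (tr @ [Step i]) L"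
proof -
  have lin: "is_linearization tr L" and coupled: "lin_coupled c tr L"
    using inv by (simp_all add: lin_inv_def)
  have "lin_coupled c' (tr @ [Step i]) L"
    using coupled trans_Step_enabled[OF tr] internal unfolding lin_coupled_def pending_snoc_Step
    by (subst trans_Step_pc[OF tr]) (auto simp: nth_snoc_pending)
  moreover have "abs_rel n c' (rmr_state (\<lambda>_. 1) (lin_hist tr L))"
    using inv tr internal by (auto simp: lin_inv_def intro: abs_rel_internal)
  ultimately show ?thesis
    using inv is_linearization_snoc_non_return[OF lin]
    by (simp add: lin_inv_def lin_hist_snoc[OF lin])
qed

lemma lin_coupled_linearize:
  assumes coupled: "lin_coupled c tr L" and tr: "trans n c (Step i) c'" and i: "pc c' i = Done v"
    and k0: "act_proc (tr ! k0) = i" "k0 \<notin> fst ` set L"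
    and unique: "\<And>k. pending tr k \<Longrightarrow> act_proc (tr ! k) = i \<Longrightarrow> k = k0"
  shows "lin_coupled c' (tr @ [Step i]) (L @ [(k0, v)])"
  unfolding lin_coupled_def pending_snoc_Step
proof (intro allI impI)
  fix k w assume k: "pending tr k"
  show "(k, w) \<in> set (L @ [(k0, v)]) \<longleftrightarrow> pc c' (act_proc ((tr @ [Step i]) ! k)) = Done w"
  proof (cases "act_proc (tr ! k) = i")
    case True
    have proc: "act_proc ((tr @ [Step i]) ! k) = i"
      using True by (simp add: nth_snoc_pending[OF k])
    have "(k0, w) \<notin> set L"
      using k0(2) by (metis fst_conv image_eqI)
    then show ?thesis
      using proc i unique[OF k True] by auto
  next
    case False
    then have "k \<noteq> k0" using k0(1) by blast
    then show ?thesis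
      using coupled k False unfolding lin_coupled_def
      by (subst trans_Step_pc[OF tr]) (simp add: nth_snoc_pending[OF k])
  qed
qed

lemma lin_inv_linearize:
  assumes inv: "lin_inv n c tr L" and cons: "pending_consistent c tr"
    and tr: "trans n c (Step i) c'" and i: "pc c' i = Done v"
  obtains k0 where "lin_inv n c' (tr @ [Step i]) (L @ [(k0, v)])"
proof -
  have lin: "is_linearization tr L" and coupled: "lin_coupled c tr L"
    and legal: "rmr_legal n (\<lambda>_. 1) (lin_hist tr L)"
    and abs: "abs_rel n c (rmr_state (\<lambda>_. 1) (lin_hist tr L))"
    using inv by (simp_all add: lin_inv_def)
  have enabled: "pc c i \<noteq> Idle" "\<And>w. pc c i \<noteq> Done w"
    using trans_Step_enabled[OF tr] by auto
  obtain k0 where k0: "pending tr k0" "act_proc (tr ! k0) = i"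
      "executes (inv_op (tr ! k0)) (pc c i)"
    and unique: "\<And>k. pending tr k \<Longrightarrow> act_proc (tr ! k) = i \<Longrightarrow> k = k0"
    using pending_consistent_active[OF cons enabled(1)] by metis
  have fresh: "k0 \<notin> fst ` set L"
    using coupled k0(1,2) enabled(2) unfolding lin_coupled_def by force
  let ?L = "L @ [(k0, v)]"
  have lin': "is_linearization (tr @ [Step i]) ?L"
    by (intro is_linearization_snoc_non_return is_linearization_append_pending lin k0(1) fresh) simp
  have hist: "lin_hist (tr @ [Step i]) ?L = lin_hist tr L @ [(i, inv_op (tr ! k0), v)]"
    using lin_hist_snoc[OF is_linearization_append_pending[OF lin k0(1) fresh]] k0(2)
    by (simp add: lin_hist_append)
  have "lin_coupled c' (tr @ [Step i]) ?L"
    by (rule lin_coupled_linearize[OF coupled tr i k0(2) fresh unique])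
  moreover have "rmr_legal n (\<lambda>_. 1) (lin_hist (tr @ [Step i]) ?L) \<and>
      abs_rel n c' (rmr_state (\<lambda>_. 1) (lin_hist (tr @ [Step i]) ?L))"
    using legal abs_rel_linearize[OF tr i k0(3) abs]
    by (simp add: hist rmr_legal_append rmr_state_append)
  ultimately show ?thesis
    using lin' that by (simp add: lin_inv_def)
qed

lemma lin_inv_Return:
  assumes inv: "lin_inv n c tr L" and tr: "trans n c (Return i v) c'"
  shows "lin_inv n c' (tr @ [Return i v]) L"
proof -
  have lin: "is_linearization tr L" and coupled: "lin_coupled c tr L"
    using inv by (simp_all add: lin_inv_def)
  have i: "pc c i = Done v" and pc': "pc c' = (pc c)(i := Idle)"
    using tr by (auto elim: trans_ReturnE)
  have lin': "is_linearization (tr @ [Return i v]) L"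
    using coupled i by (intro is_linearization_snoc_Return[OF lin]) (auto simp: lin_coupled_def)
  have "lin_coupled c' (tr @ [Return i v]) L"
    using coupled unfolding lin_coupled_def pending_snoc_Return
    by (auto simp: pc' nth_snoc_pending)
  moreover have "abs_rel n c' (rmr_state (\<lambda>_. 1) (lin_hist tr L))"
    using inv tr by (auto simp: lin_inv_def intro: abs_rel_internal)
  ultimately show ?thesis
    using inv lin' by (simp add: lin_inv_def lin_hist_snoc[OF lin])
qed

lemma reach_lin_inv:
  assumes "reach n c tr" "0 < n"
  shows "\<exists>L. lin_inv n c tr L"
  using assms(1)
proof (induction rule: reach.induct)
  case reach_init
  show ?case
    using abs_rel_init[OF assms(2)]
    by (intro exI[of _ "[]"])
       (simp add: lin_inv_def is_linearization_def lin_coupled_def lin_hist_def pending_def)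
next
  case (reach_step c tr a c')
  then obtain L where inv: "lin_inv n c tr L" by blast
  have cons: "pending_consistent c tr"
    using reach_step.hyps(1) by (rule reach_pending_consistent)
  show ?case
  proof (cases a)
    case (Invoke i ov)
    then show ?thesis using lin_inv_Invoke[OF inv cons] reach_step.hyps(2) by blast
  next
    case (Step i)
    show ?thesis
    proof (cases "\<exists>v. pc c' i = Done v")
      case True
      then show ?thesis
        using lin_inv_linearize[OF inv cons] reach_step.hyps(2) Step by metis
    next
      case False
      then show ?thesis
        using lin_inv_Step_internal[OF inv] reach_step.hyps(2) Step by blast
    qed
  next
    case (Return i v)
    then show ?thesis using lin_inv_Return[OF inv] reach_step.hyps(2) by blast
  qed
qed

lemma algorithm_linearizable: "0 < n \<Longrightarrow> alg_linearizable n"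
  unfolding alg_linearizable_def linearizable_iff by (metis lin_inv_def reach_lin_inv)

section \<open>Wait-freedom and step complexity\<close>

fun remaining_actions :: "pcs \<Rightarrow> nat" where
  "remaining_actions Idle = 0"
| "remaining_actions (WRd x) = 3"
| "remaining_actions (WWrA x) = 2"
| "remaining_actions (WWrB x) = 2"
| "remaining_actions RRd = 2"
| "remaining_actions (Done v) = 1"

lemma remaining_actions_start: "remaining_actions (start ov) \<le> 3"
  by (cases ov) auto

lemma trans_pc_other: "trans n c a c' \<Longrightarrow> act_proc a \<noteq> i \<Longrightarrow> pc c' i = pc c i"
  by (erule trans.cases) auto

lemma trans_own_remaining_actions:
  assumes "trans n c a c'" "act_proc a = i" "pc c i \<noteq> Idle" "\<not> is_ret_of i a"
  shows "pc c' i \<noteq> Idle \<and> remaining_actions (pc c' i) < remaining_actions (pc c i)"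
  using assms by (cases rule: trans.cases) auto

definition own_actions :: "act list \<Rightarrow> nat \<Rightarrow> nat \<Rightarrow> nat set" where
  "own_actions tr i k = {m. k < m \<and> m < length tr \<and> act_proc (tr ! m) = i}"

lemma finite_own_actions: "finite (own_actions tr i k)"
  by (simp add: own_actions_def)

lemma own_actions_snoc:
  "k < length tr \<Longrightarrow> own_actions (tr @ [a]) i k =
     own_actions tr i k \<union> (if act_proc a = i then {length tr} else {})"
  by (auto simp: own_actions_def nth_append less_Suc_eq)

lemma card_own_actions_snoc:
  assumes "k < length tr"
  shows "card (own_actions (tr @ [a]) i k) =
    card (own_actions tr i k) + (if act_proc a = i then 1 else 0)"
proof -
  have "length tr \<notin> own_actions tr i k"
    by (simp add: own_actions_def)
  then show ?thesis using assms finite_own_actions by (simp add: own_actions_snoc)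
qed

lemma reach_own_actions_bound:
  "reach n c tr \<Longrightarrow> k < length tr \<Longrightarrow> tr ! k = Invoke i ov \<Longrightarrow>
   (\<forall>m. k < m \<and> m < length tr \<longrightarrow> \<not> is_ret_of i (tr ! m)) \<Longrightarrow>
   pc c i \<noteq> Idle \<and> remaining_actions (pc c i) + card (own_actions tr i k) \<le> 3"
proof (induction arbitrary: k rule: reach.induct)
  case reach_init
  then show ?case by simp
next
  case (reach_step c tr a c')
  show ?case
  proof (cases "k = length tr")
    case True
    then have "a = Invoke i ov" using reach_step.prems(2) by simp
    then have "pc c' i = start ov"
      using reach_step.hyps(2) by (auto elim: trans_InvokeE)
    moreover have "own_actions (tr @ [a]) i k = {}"
      using True by (auto simp: own_actions_def)
    ultimately show ?thesis
      using executes_not_Idle[OF executes_start] remaining_actions_start by simp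
  next
    case False
    then have k: "k < length tr" using reach_step.prems(1) by simp
    have "tr ! k = Invoke i ov"
      using reach_step.prems(2) k by (simp add: nth_append)
    moreover have "\<forall>m. k < m \<and> m < length tr \<longrightarrow> \<not> is_ret_of i (tr ! m)"
      using reach_step.prems(3)
      by (metis butlast_snoc length_append_singleton less_SucI nth_butlast)
    ultimately have IH: "pc c i \<noteq> Idle" "remaining_actions (pc c i) + card (own_actions tr i k) \<le> 3"
      using reach_step.IH[OF k] by auto
    have "\<not> is_ret_of i a"
      using reach_step.prems(3) k by (metis length_append_singleton lessI nth_append_length)
    then show ?thesis
      using IH trans_own_remaining_actions[OF reach_step.hyps(2) _ IH(1)]
        trans_pc_other[OF reach_step.hyps(2)]
      by (cases "act_proc a = i") (auto simp: card_own_actions_snoc[OF k])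
  qed
qed

lemma reach_own_actions_le_2:
  assumes "reach n c tr" "k < length tr" "tr ! k = Invoke i ov"
    and "\<forall>m. k < m \<and> m < length tr \<longrightarrow> \<not> is_ret_of i (tr ! m)"
  shows "card (own_actions tr i k) \<le> 2"
proof -
  have "pc c i \<noteq> Idle" "remaining_actions (pc c i) + card (own_actions tr i k) \<le> 3"
    using reach_own_actions_bound[OF assms] by auto
  then show ?thesis by (cases "pc c i") auto
qed

lemma reach_take: "reach n c tr \<Longrightarrow> j \<le> length tr \<Longrightarrow> \<exists>c'. reach n c' (take j tr)"
proof (induction arbitrary: j rule: reach.induct)
  case reach_init
  then show ?case using reach.reach_init by auto
next
  case (reach_step c tr a c')
  show ?case
  proof (cases "j \<le> length tr")
    case True
    then show ?thesis using reach_step.IH by simp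
  next
    case False
    then have "j = Suc (length tr)" using reach_step.prems by simp
    then show ?thesis using reach.reach_step[OF reach_step.hyps] by auto
  qed
qed

lemma algorithm_step_complexity_le_2: "step_complexity_le n 2"
  unfolding step_complexity_le_def
proof (intro allI impI, elim conjE)
  fix c tr k i ov j
  assume tr: "reach n c tr" and k: "k < length tr" "tr ! k = Invoke i ov" and j: "j \<le> length tr"
    and no_ret: "\<forall>m. k < m \<and> m < j \<longrightarrow> \<not> is_ret_of i (tr ! m)"
  show "card {m. k < m \<and> m < j \<and> tr ! m = Step i} \<le> 2"
  proof (cases "k < j")
    case True
    obtain c' where "reach n c' (take j tr)"
      using reach_take[OF tr j] by blast
    then have "card (own_actions (take j tr) i k) \<le> 2"
      using True j k no_ret by (intro reach_own_actions_le_2) auto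
    moreover have "{m. k < m \<and> m < j \<and> tr ! m = Step i} \<subseteq> own_actions (take j tr) i k"
      using j by (auto simp: own_actions_def)
    ultimately show ?thesis
      by (meson card_mono finite_own_actions le_trans)
  next
    case False
    then have "{m. k < m \<and> m < j \<and> tr ! m = Step i} = {}" by auto
    then show ?thesis by (simp only: card.empty)
  qed
qed

lemma inf_exec_reach: "inf_exec n f g \<Longrightarrow> reach n (f m) (map g [0..<m])"
proof (induction m)
  case 0
  then show ?case using reach_init by (simp add: inf_exec_def)
next
  case (Suc m)
  then show ?case using reach_step[OF Suc.IH] by (simp add: inf_exec_def)
qed

lemma algorithm_wait_free: "wait_free n"
  unfolding wait_free_def
proof (intro allI impI, elim conjE)
  fix f g k i ov
  assume ex: "inf_exec n f g" and k: "g k = Invoke i ov"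
    and active: "\<forall>m. \<exists>m' > m. act_proc (g m') = i"
  show "\<exists>m > k. is_ret_of i (g m)"
  proof (rule ccontr)
    assume "\<not> (\<exists>m > k. is_ret_of i (g m))"
    then have no_ret: "\<forall>m. k < m \<longrightarrow> \<not> is_ret_of i (g m)" by blast
    obtain m1 m2 m3 where m: "k < m1" "m1 < m2" "m2 < m3"
      and own: "act_proc (g m1) = i" "act_proc (g m2) = i" "act_proc (g m3) = i"
      using active by metis
    let ?tr = "map g [0..<Suc m3]"
    have "card (own_actions ?tr i k) \<le> 2"
      using m k no_ret
      by (intro reach_own_actions_le_2[OF inf_exec_reach[OF ex]]) (auto simp del: upt_Suc)
    moreover have "{m1, m2, m3} \<subseteq> own_actions ?tr i k"
      using m own by (auto simp: own_actions_def simp del: upt_Suc)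
    then have "card {m1, m2, m3} \<le> card (own_actions ?tr i k)"
      by (rule card_mono[OF finite_own_actions])
    ultimately show False using m by simp
  qed
qed

section \<open>Sequential exactness\<close>

lemma sequential_butlast: "sequential (tr @ [a]) \<Longrightarrow> sequential tr"
  unfolding sequential_def
proof (intro allI impI, elim conjE)
  fix k1 k2
  assume seq: "\<forall>k1 k2. k1 < k2 \<and> k2 < length (tr @ [a]) \<and> is_inv ((tr @ [a]) ! k1) \<and>
      is_inv ((tr @ [a]) ! k2) \<longrightarrow> (\<exists>m. ret_idx (tr @ [a]) k1 = Some m \<and> m < k2)"
    and k: "k1 < k2" "k2 < length tr" "is_inv (tr ! k1)" "is_inv (tr ! k2)"
  have "\<exists>m. ret_idx (tr @ [a]) k1 = Some m \<and> m < k2"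
    using k by (intro seq[rule_format]) (simp add: nth_append)
  then obtain m where m: "ret_idx (tr @ [a]) k1 = Some m" "m < k2" by blast
  have k1: "k1 < length tr" using k by simp
  show "\<exists>m. ret_idx tr k1 = Some m \<and> m < k2"
  proof (cases "ret_idx tr k1")
    case None
    then show ?thesis using m k ret_idx_snoc[OF k1, of a] by (auto split: if_splits)
  next
    case (Some m')
    then show ?thesis using m ret_idx_snoc[OF k1, of a] by auto
  qed
qed

lemma sequential_Invoke_not_pending: "sequential (tr @ [Invoke i ov]) \<Longrightarrow> \<not> pending tr k"
proof
  assume seq: "sequential (tr @ [Invoke i ov])" and k: "pending tr k"
  have "\<exists>m. ret_idx (tr @ [Invoke i ov]) k = Some m \<and> m < length tr"
    using k by (intro seq[unfolded sequential_def, rule_format]) (simp add: pending_def nth_append)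
  then show False
    using k by (simp add: pending_def ret_idx_snoc_non_return)
qed

lemma sequential_pending_last:
  assumes "sequential tr" "pending tr k0" "k0 < k" "k < length tr"
  shows "\<not> is_inv (tr ! k)"
proof
  assume "is_inv (tr ! k)"
  then have "\<exists>m. ret_idx tr k0 = Some m \<and> m < k"
    using assms by (intro assms(1)[unfolded sequential_def, rule_format]) (simp add: pending_def)
  then show False using assms(2) by (simp add: pending_def)
qed

lemma sequential_single_active:
  assumes cons: "pending_consistent c tr" and seq: "sequential tr"
    and active: "pc c i \<noteq> Idle" "pc c j \<noteq> Idle"
  shows "i = j"
proof -
  obtain ki kj where k: "pending tr ki" "act_proc (tr ! ki) = i"
    "pending tr kj" "act_proc (tr ! kj) = j"
    using pending_consistent_active[OF cons active(1)] pending_consistent_active[OF cons active(2)]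
    by metis
  have "\<not> ki < kj" "\<not> kj < ki"
    using sequential_pending_last[OF seq] k by (auto simp: pending_def)
  then show ?thesis using k by simp
qed

lemma seq_hist_alt:
  "seq_hist tr = map (\<lambda>k. (inv_op (tr ! k), ret_resp (tr ! the (ret_idx tr k))))
      (filter (\<lambda>k. is_inv (tr ! k) \<and> ret_idx tr k \<noteq> None) [0..<length tr])"
proof -
  have "concat (map (\<lambda>k. if P k then [f k] else []) xs) = map f (filter P xs)"
    for P and f :: "nat \<Rightarrow> rop \<times> resp" and xs
    by (induction xs) auto
  then show ?thesis unfolding seq_hist_def by simp
qed

lemma filter_upt_append_last:
  "j < N \<Longrightarrow> \<not> P j \<Longrightarrow> (\<forall>k. j < k \<and> k < N \<longrightarrow> \<not> P k) \<Longrightarrow>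
   filter (\<lambda>k. P k \<or> k = j) [0..<N] = filter P [0..<N] @ [j]"
proof (induction N)
  case 0
  then show ?case by simp
next
  case (Suc N)
  show ?case
  proof (cases "N = j")
    case True
    have "filter (\<lambda>k. P k \<or> k = j) [0..<j] = filter P [0..<j]"
      by (rule filter_cong) auto
    then show ?thesis using True Suc.prems by simp
  next
    case False
    then show ?thesis using Suc by auto
  qed
qed

lemma seq_hist_snoc_completed:
  assumes "k \<in> set (filter (\<lambda>k. is_inv (tr ! k) \<and> ret_idx tr k \<noteq> None) [0..<length tr])"
  shows "(inv_op ((tr @ [a]) ! k), ret_resp ((tr @ [a]) ! the (ret_idx (tr @ [a]) k))) =
    (inv_op (tr ! k), ret_resp (tr ! the (ret_idx tr k)))"
proof -
  obtain m where "k < length tr" "ret_idx tr k = Some m"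
    using assms by auto
  moreover have "m < length tr" using ret_idx_SomeD[OF calculation(2)] by blast
  ultimately show ?thesis by (simp add: ret_idx_snoc nth_append)
qed

lemma seq_hist_snoc_non_return:
  assumes "\<And>k. pending tr k \<Longrightarrow> \<not> is_ret_of (act_proc (tr ! k)) a"
  shows "seq_hist (tr @ [a]) = seq_hist tr"
proof -
  let ?P = "\<lambda>tr k. is_inv (tr ! k) \<and> ret_idx tr k \<noteq> None"
  have "ret_idx (tr @ [a]) k \<noteq> None \<longleftrightarrow> ret_idx tr k \<noteq> None"
    if "k < length tr" "is_inv (tr ! k)" for k
    using that assms[of k] by (simp add: pending_def ret_idx_snoc split: option.split)
  then have "?P (tr @ [a]) k = ?P tr k" if "k < length tr" for k
    using that by (auto simp: nth_append)
  then have "filter (?P (tr @ [a])) [0..<length tr] = filter (?P tr) [0..<length tr]"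
    by (intro filter_cong) auto
  moreover have "\<not> ?P (tr @ [a]) (length tr)"
    by (simp add: ret_idx_snoc_length)
  ultimately show ?thesis
    unfolding seq_hist_alt by (simp add: seq_hist_snoc_completed cong: map_cong)
qed

lemma seq_hist_snoc_Return:
  assumes k0: "pending tr k0" "act_proc (tr ! k0) = i"
    and unique: "\<And>k. pending tr k \<Longrightarrow> act_proc (tr ! k) = i \<Longrightarrow> k = k0"
    and last: "\<And>k. k0 < k \<Longrightarrow> k < length tr \<Longrightarrow> \<not> is_inv (tr ! k)"
  shows "seq_hist (tr @ [Return i v]) = seq_hist tr @ [(inv_op (tr ! k0), v)]"
proof -
  let ?tr = "tr @ [Return i v]"
  let ?P = "\<lambda>tr k. is_inv (tr ! k) \<and> ret_idx tr k \<noteq> None"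
  let ?F = "\<lambda>tr k. (inv_op (tr ! k), ret_resp (tr ! the (ret_idx tr k)))"
  have "ret_idx ?tr k \<noteq> None \<longleftrightarrow> ret_idx tr k \<noteq> None \<or> k = k0"
    if "k < length tr" "is_inv (tr ! k)" for k
  proof (cases "ret_idx tr k")
    case None
    then have "act_proc (tr ! k) = i \<longleftrightarrow> k = k0"
      using that k0(2) unique[of k] by (auto simp: pending_def)
    then show ?thesis using that None by (simp add: ret_idx_snoc_Return)
  qed (simp add: that ret_idx_snoc_Return)
  then have "?P ?tr k = (?P tr k \<or> k = k0)" if "k < length tr" for k
    using that k0(1) by (auto simp: nth_append pending_def)
  then have "filter (?P ?tr) [0..<length tr] = filter (\<lambda>k. ?P tr k \<or> k = k0) [0..<length tr]"
    by (intro filter_cong) auto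
  also have "\<dots> = filter (?P tr) [0..<length tr] @ [k0]"
    using k0 last by (intro filter_upt_append_last) (auto simp: pending_def)
  finally have "filter (?P ?tr) [0..<length ?tr] = filter (?P tr) [0..<length tr] @ [k0]"
    by (simp add: ret_idx_snoc_length)
  then have "seq_hist ?tr = map (?F ?tr) (filter (?P tr) [0..<length tr] @ [k0])"
    unfolding seq_hist_alt by (rule arg_cong)
  also have "\<dots> = map (?F tr) (filter (?P tr) [0..<length tr]) @ [?F ?tr k0]"
    using seq_hist_snoc_completed by simp
  also have "?F ?tr k0 = (inv_op (tr ! k0), v)"
    using k0 by (simp add: pending_def ret_idx_snoc_Return nth_append)
  finally show ?thesis
    unfolding seq_hist_alt .
qed

fun mr_state :: "nat \<Rightarrow> (rop \<times> resp) list \<Rightarrow> nat" where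
  "mr_state m [] = m"
| "mr_state m ((RMaxWrite x, v) # h) = mr_state (max m x) h"
| "mr_state m ((RMaxRead, v) # h) = mr_state m h"

lemma mr_legal_append: "mr_legal m (h @ h') \<longleftrightarrow> mr_legal m h \<and> mr_legal (mr_state m h) h'"
  by (induction m h rule: mr_legal.induct) auto

lemma mr_state_append: "mr_state m (h @ h') = mr_state (mr_state m h) h'"
  by (induction m h rule: mr_state.induct) auto

definition seq_inv :: "config \<Rightarrow> act list \<Rightarrow> nat \<Rightarrow> bool" where
  "seq_inv c tr M \<longleftrightarrow>
     (\<forall>i. (\<forall>x. pc c i \<noteq> WWrA x) \<longrightarrow> lr c i \<le> shR c) \<and>
     ((\<forall>i. pc c i \<noteq> Done RTrue) \<longrightarrow> shR c = M) \<and>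
     (\<forall>i x. pc c i = WWrA x \<longrightarrow> lr c i = x \<and> M < x) \<and>
     (\<forall>i x. pc c i = WWrB x \<longrightarrow> M < x) \<and>
     (\<forall>k x. pending tr k \<longrightarrow> inv_op (tr ! k) = RMaxWrite x \<longrightarrow>
        pc c (act_proc (tr ! k)) = Done RTrue \<longrightarrow> shR c = max M x) \<and>
     (\<forall>i y. pc c i = Done (RVal y) \<longrightarrow> y = M)"

lemma seq_invI:
  assumes idle: "\<And>j. j \<noteq> i \<Longrightarrow> pc c j = Idle \<and> lr c j \<le> shR c"
    and lr: "\<forall>x. pc c i \<noteq> WWrA x \<Longrightarrow> lr c i \<le> shR c"
    and R: "pc c i \<noteq> Done RTrue \<Longrightarrow> shR c = M"
    and A: "\<And>x. pc c i = WWrA x \<Longrightarrow> lr c i = x \<and> M < x"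
    and B: "\<And>x. pc c i = WWrB x \<Longrightarrow> M < x"
    and W: "\<And>k x. pending tr k \<Longrightarrow> act_proc (tr ! k) = i \<Longrightarrow> inv_op (tr ! k) = RMaxWrite x \<Longrightarrow>
      pc c i = Done RTrue \<Longrightarrow> shR c = max M x"
    and V: "\<And>y. pc c i = Done (RVal y) \<Longrightarrow> y = M"
  shows "seq_inv c tr M"
  unfolding seq_inv_def
proof (intro conjI allI impI)
  fix j
  show "lr c j \<le> shR c" if "\<forall>x. pc c j \<noteq> WWrA x"
    using that idle lr by (cases "j = i") auto
  show "lr c j = x" "M < x" if "pc c j = WWrA x" for x
    using that idle A by (cases "j = i"; force)+
  show "M < x" if "pc c j = WWrB x" for x
    using that idle B by (cases "j = i") auto
  show "y = M" if "pc c j = Done (RVal y)" for y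
    using that idle V by (cases "j = i") auto
next
  show "shR c = M" if "\<forall>j. pc c j \<noteq> Done RTrue"
    using that R by blast
  show "shR c = max M x"
    if "pending tr k" "inv_op (tr ! k) = RMaxWrite x" "pc c (act_proc (tr ! k)) = Done RTrue"
    for k x
    using that idle W by (cases "act_proc (tr ! k) = i") force+
qed

lemma seq_inv_Step:
  assumes inv: "seq_inv c tr M" and cons: "pending_consistent c tr" and seq: "sequential tr"
    and tr: "trans n c (Step i) c'"
  shows "seq_inv c' (tr @ [Step i]) M"
proof -
  have enabled: "pc c i \<noteq> Idle" "\<And>w. pc c i \<noteq> Done w"
    using trans_Step_enabled[OF tr] by auto
  obtain k0 where k0: "pending tr k0" "act_proc (tr ! k0) = i"
      "executes (inv_op (tr ! k0)) (pc c i)"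
    and unique: "\<And>k. pending tr k \<Longrightarrow> act_proc (tr ! k) = i \<Longrightarrow> k = k0"
    using pending_consistent_active[OF cons enabled(1)] by metis
  have idle: "j \<noteq> i \<Longrightarrow> pc c j = Idle" for j
    using sequential_single_active[OF cons seq enabled(1)] by blast
  then have R: "shR c = M"
    using inv enabled(2) unfolding seq_inv_def by (metis pcs.distinct(9))
  have lr: "(\<And>x. pc c j \<noteq> WWrA x) \<Longrightarrow> lr c j \<le> M" for j
    using inv R unfolding seq_inv_def by metis
  then have other: "j \<noteq> i \<Longrightarrow> pc c j = Idle \<and> (\<forall>x. M < x \<longrightarrow> lr c j \<le> x)" for j
    using idle by (metis less_imp_le order.trans pcs.distinct(3))
  have A: "pc c i = WWrA x \<Longrightarrow> lr c i = x \<and> M < x" and B: "pc c i = WWrB x \<Longrightarrow> M < x" for x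
    using inv unfolding seq_inv_def by blast+
  have k0': "pending (tr @ [Step i]) k \<Longrightarrow> act_proc ((tr @ [Step i]) ! k) = i \<Longrightarrow>
      (tr @ [Step i]) ! k = tr ! k0" for k
    using unique by (auto simp: pending_snoc_Step nth_snoc_pending)
  from tr show ?thesis
    by cases (insert R lr other A B k0(3) k0' executes_iff, auto intro!: seq_invI[where i = i])
qed

lemma seq_inv_Invoke:
  assumes inv: "seq_inv c tr M" and cons: "pending_consistent c tr"
    and seq: "sequential (tr @ [Invoke i ov])" and tr: "trans n c (Invoke i ov) c'"
  shows "seq_inv c' (tr @ [Invoke i ov]) M"
proof -
  have idle: "pc c j = Idle" for j
    using cons sequential_Invoke_not_pending[OF seq] unfolding pending_consistent_def by blast
  then have "shR c = M" "lr c j \<le> shR c" for j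
    using inv unfolding seq_inv_def by auto
  moreover have "pc c' = (pc c)(i := start ov)" "lr c' = lr c" "shR c' = shR c"
    using tr by (auto elim: trans_InvokeE)
  moreover have "start ov \<noteq> WWrA x" "start ov \<noteq> WWrB x" "start ov \<noteq> Done w" for x w
    by (cases ov; simp)+
  ultimately show ?thesis
    using idle by (intro seq_invI[where i = i]) auto
qed

lemma seq_inv_Done:
  assumes inv: "seq_inv c tr M" and i: "pc c i = Done v" and idle: "\<And>j. j \<noteq> i \<Longrightarrow> pc c j = Idle"
    and k0: "pending tr k0" "act_proc (tr ! k0) = i" "executes (inv_op (tr ! k0)) (pc c i)"
  shows "mr_legal M [(inv_op (tr ! k0), v)] \<and> shR c = mr_state M [(inv_op (tr ! k0), v)]"
proof (cases "inv_op (tr ! k0)")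
  case (RMaxWrite x)
  then have "v = RTrue" using k0(3) i by simp
  moreover have "shR c = max M x"
    using inv k0 RMaxWrite i \<open>v = RTrue\<close> unfolding seq_inv_def by blast
  ultimately show ?thesis using RMaxWrite by simp
next
  case RMaxRead
  then obtain y where "v = RVal y" using k0(3) i by auto
  moreover have "pc c j \<noteq> Done RTrue" for j
    using idle i \<open>v = RVal y\<close> by (cases "j = i") auto
  then have "y = M" "shR c = M"
    using inv i \<open>v = RVal y\<close> unfolding seq_inv_def by blast+
  ultimately show ?thesis using RMaxRead by simp
qed

lemma seq_inv_Return:
  assumes inv: "seq_inv c tr M" and cons: "pending_consistent c tr" and seq: "sequential tr"
    and tr: "trans n c (Return i v) c'"
  obtains e where "seq_hist (tr @ [Return i v]) = seq_hist tr @ [e]" "mr_legal M [e]"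
    "seq_inv c' (tr @ [Return i v]) (mr_state M [e])"
proof -
  have i: "pc c i = Done v" and pc': "pc c' = (pc c)(i := Idle)"
    and lr': "lr c' = lr c" and R': "shR c' = shR c"
    using tr by (auto elim: trans_ReturnE)
  obtain k0 where k0: "pending tr k0" "act_proc (tr ! k0) = i"
      "executes (inv_op (tr ! k0)) (pc c i)"
    and unique: "\<And>k. pending tr k \<Longrightarrow> act_proc (tr ! k) = i \<Longrightarrow> k = k0"
    using pending_consistent_active[OF cons] i by (metis pcs.distinct(9))
  have idle: "j \<noteq> i \<Longrightarrow> pc c j = Idle" for j
    using sequential_single_active[OF cons seq] i by (metis pcs.distinct(9))
  have "\<forall>x. pc c j \<noteq> WWrA x" for j
    using idle i by (cases "j = i") auto
  then have lr: "lr c j \<le> shR c" for j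
    using inv unfolding seq_inv_def by blast
  let ?e = "(inv_op (tr ! k0), v)"
  have "seq_hist (tr @ [Return i v]) = seq_hist tr @ [?e]"
    using k0(1,2) unique sequential_pending_last[OF seq k0(1)] by (rule seq_hist_snoc_Return)
  moreover have "mr_legal M [?e] \<and> shR c = mr_state M [?e]"
    using inv i idle k0 by (rule seq_inv_Done)
  moreover have "seq_inv c' (tr @ [Return i v]) (mr_state M [?e])"
    using calculation(2) lr idle by (intro seq_invI[where i = i]) (auto simp: pc' lr' R')
  ultimately show ?thesis using that by blast
qed

lemma reach_seq_inv:
  "reach n c tr \<Longrightarrow> sequential tr \<Longrightarrow>
     mr_legal 1 (seq_hist tr) \<and> seq_inv c tr (mr_state 1 (seq_hist tr))"
proof (induction rule: reach.induct)
  case reach_init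
  show ?case by (simp add: seq_hist_alt seq_inv_def init_def pending_def)
next
  case (reach_step c tr a c')
  have seq: "sequential tr" using reach_step.prems by (rule sequential_butlast)
  have legal: "mr_legal 1 (seq_hist tr)" and inv: "seq_inv c tr (mr_state 1 (seq_hist tr))"
    using reach_step.IH[OF seq] by auto
  have cons: "pending_consistent c tr"
    using reach_step.hyps(1) by (rule reach_pending_consistent)
  show ?case
  proof (cases a)
    case (Invoke i ov)
    moreover have "seq_hist (tr @ [a]) = seq_hist tr"
      using sequential_Invoke_not_pending reach_step.prems Invoke
      by (blast intro: seq_hist_snoc_non_return)
    ultimately show ?thesis
      using legal seq_inv_Invoke[OF inv cons] reach_step.prems reach_step.hyps(2) by simp
  next
    case (Step i)
    moreover have "seq_hist (tr @ [a]) = seq_hist tr"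
      using Step by (simp add: seq_hist_snoc_non_return)
    ultimately show ?thesis
      using legal seq_inv_Step[OF inv cons seq] reach_step.hyps(2) by simp
  next
    case (Return i v)
    then show ?thesis
      using seq_inv_Return[OF inv cons seq] reach_step.hyps(2) legal
      by (metis mr_legal_append mr_state_append)
  qed
qed

lemma algorithm_sequentially_exact: "sequentially_exact n"
  unfolding sequentially_exact_def using reach_seq_inv by blast

theorem theorem4:
  shows "\<exists>C::nat. \<forall>n::nat. n \<ge> 2 \<longrightarrow>
           alg_linearizable n \<and> sequentially_exact n \<and> wait_free n \<and> step_complexity_le n C"
  using algorithm_linearizable algorithm_sequentially_exact algorithm_wait_free
    algorithm_step_complexity_le_2
  by (intro exI[of _ 2]) auto

end
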